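(* Let $P$ be a monic polynomial in $\mathbb{Z}[x]$, and let $R$ be the set of real numbers $\beta$ such that $\|\beta a_n\|\to0$ for every sequence of integers $(a_n)$ satisfying the linear recurrence with characteristic polynomial $P$. Then $R$ is a ring, and if $P(0)=\pm1$ then $R$ is integral over $\mathbb{Z}$ (every element of $R$ is an algebraic integer).
   Context: $\|x\|$ denotes the distance from a real number $x$ to the nearest integer. A sequence satisfies the linear recurrence with characteristic polynomial $P(x)=x^k+p_{k-1}x^{k-1}+\dots+p_0$ if $a_{n+k}+p_{k-1}a_{n+k-1}+\dots+p_0a_n=0$ for all $n$. *)

theory Defs
  imports Complex_Main "HOL-Computational_Algebra.Polynomial"
begin

definition dist_nint :: "real \<Rightarrow> real" where
  "dist_nint x = min (x - of_int \<lfloor>x\<rfloor>) (of_int \<lceil>x\<rceil> - x)"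

definition satisfies_rec :: "int poly \<Rightarrow> (nat \<Rightarrow> int) \<Rightarrow> bool" where
  "satisfies_rec P a \<longleftrightarrow> (\<forall>n. (\<Sum>i\<le>degree P. coeff P i * a (n + i)) = 0)"

definition Rset :: "int poly \<Rightarrow> real set" where
  "Rset P = {\<beta>. \<forall>a. satisfies_rec P a \<longrightarrow>
      ((\<lambda>n. dist_nint (\<beta> * of_int (a n))) \<longlonglongrightarrow> 0)}"

end

theory Submission
  imports Defs "Jordan_Normal_Form.Char_Poly"
begin

text \<open>If \<open>\<beta> a\<^sub>n\<close> is close to the integer \<open>c\<^sub>n\<close> for a solution \<open>a\<close>, then \<open>c\<close> eventually satisfies
  the recurrence itself, since its defect is an integer tending to 0. Closure under
  multiplication follows: \<open>\<beta> \<gamma> a\<^sub>n = \<gamma> c\<^sub>n + \<gamma> (\<beta> a\<^sub>n - c\<^sub>n)\<close>.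
  If \<open>P(0) = \<plusminus>1\<close> the recurrence can be run backwards, so \<open>c\<close> extends to an integer solution.
  Applied to the basis solutions \<open>e\<^sub>j\<close> (with \<open>e\<^sub>j(i) = \<delta>\<^sub>i\<^sub>j\<close> for \<open>i < deg P\<close>) this gives an
  integer matrix \<open>B\<close> with \<open>(\<beta> I - B) E(n) \<longlonglongrightarrow> 0\<close>, where \<open>E(n) = (e\<^sub>j(n))\<^sub>j\<close>. If \<open>\<beta> I - B\<close>
  were invertible, the integer sequence \<open>e\<^sub>0\<close> would tend to 0, hence vanish eventually, hence
  everywhere (running backwards again), contradicting \<open>e\<^sub>0(0) = 1\<close>. So \<open>\<beta>\<close> is an eigenvalue
  of an integer matrix.\<close>

lemma dist_nint_eq_abs_round: "dist_nint x = \<bar>x - of_int (round x)\<bar>"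
proof -
  have "\<bar>x - of_int (round x)\<bar> \<le> dist_nint x"
    unfolding dist_nint_def using round_diff_minimal[of x "\<lfloor>x\<rfloor>"] round_diff_minimal[of x "\<lceil>x\<rceil>"]
    by (simp add: min_def)
  moreover have "dist_nint x \<le> \<bar>x - of_int (round x)\<bar>"
    unfolding dist_nint_def round_altdef by (auto simp: min_def)
  ultimately show ?thesis by linarith
qed

lemma dist_nint_le: "dist_nint x \<le> \<bar>x - of_int z\<bar>"
  unfolding dist_nint_eq_abs_round by (rule round_diff_minimal)

lemma dist_nint_nonneg: "0 \<le> dist_nint x"
  by (simp add: dist_nint_eq_abs_round)

lemma dist_nint_of_int [simp]: "dist_nint (of_int z) = 0"
  by (simp add: dist_nint_eq_abs_round)

lemma dist_nint_minus [simp]: "dist_nint (- x) = dist_nint x"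
  unfolding dist_nint_def by (simp add: ceiling_minus floor_minus min.commute)

lemma dist_nint_add_le: "dist_nint (x + y) \<le> dist_nint x + dist_nint y"
proof -
  have "dist_nint (x + y) \<le> \<bar>(x + y) - of_int (round x + round y)\<bar>" by (rule dist_nint_le)
  also have "\<dots> \<le> \<bar>x - of_int (round x)\<bar> + \<bar>y - of_int (round y)\<bar>" by simp
  finally show ?thesis by (simp add: dist_nint_eq_abs_round)
qed

lemma tendsto_dist_nint_iff: "(\<lambda>n. dist_nint (f n)) \<longlonglongrightarrow> 0 \<longleftrightarrow> (\<lambda>n. f n - of_int (round (f n))) \<longlonglongrightarrow> 0"
  by (simp add: dist_nint_eq_abs_round tendsto_rabs_zero_iff)

lemma dist_nint_tendsto_zero_if_bounded:
  assumes "\<And>n. dist_nint (f n) \<le> g n" and "g \<longlonglongrightarrow> 0"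
  shows "(\<lambda>n. dist_nint (f n)) \<longlonglongrightarrow> 0"
proof (rule tendsto_sandwich[OF _ _ tendsto_const assms(2)])
  show "eventually (\<lambda>n. 0 \<le> dist_nint (f n)) sequentially"
    by (simp add: dist_nint_nonneg)
  show "eventually (\<lambda>n. dist_nint (f n) \<le> g n) sequentially"
    by (simp add: assms(1))
qed

lemma eventually_zero_if_of_int_tendsto_zero:
  assumes "((\<lambda>x. real_of_int (f x)) \<longlongrightarrow> 0) F"
  shows "eventually (\<lambda>x. f x = 0) F"
proof -
  have "eventually (\<lambda>x. \<bar>real_of_int (f x)\<bar> < 1) F"
    using tendstoD[OF assms, of 1] by simp
  moreover have "\<bar>real_of_int z\<bar> < 1 \<Longrightarrow> z = 0" for z
    by linarith
  ultimately show ?thesis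
    by (rule eventually_mono)
qed

lemma satisfies_rec_iff_monic:
  assumes "lead_coeff P = 1"
  shows "satisfies_rec P a \<longleftrightarrow>
    (\<forall>n. a (n + degree P) = - (\<Sum>i<degree P. coeff P i * a (n + i)))"
proof -
  have "(\<Sum>i\<le>degree P. coeff P i * a (n + i)) = (\<Sum>i<degree P. coeff P i * a (n + i)) + a (n + degree P)" for n
    using assms by (simp add: lessThan_Suc_atMost[symmetric])
  then show ?thesis unfolding satisfies_rec_def by (auto simp: add.commute eq_neg_iff_add_eq_0)
qed

lemma satisfies_rec_round_shift:
  assumes rec: "satisfies_rec P a"
    and lim: "(\<lambda>n. dist_nint (x * of_int (a n))) \<longlonglongrightarrow> 0"
  obtains N where "satisfies_rec P (\<lambda>n. round (x * of_int (a (n + N))))"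
proof -
  define r where "r n = round (x * of_int (a n))" for n
  define err where "err n = x * of_int (a n) - of_int (r n)" for n
  have "err \<longlonglongrightarrow> 0"
    using lim unfolding tendsto_dist_nint_iff err_def r_def .
  then have "(\<lambda>n. - (\<Sum>i\<le>degree P. of_int (coeff P i) * err (n + i))) \<longlonglongrightarrow> - (\<Sum>i\<le>degree P. of_int (coeff P i) * 0)"
    by (intro tendsto_intros LIMSEQ_ignore_initial_segment)
  moreover have "real_of_int (\<Sum>i\<le>degree P. coeff P i * r (n + i))
      = - (\<Sum>i\<le>degree P. of_int (coeff P i) * err (n + i))" for n
  proof -
    have "(\<Sum>i\<le>degree P. of_int (coeff P i) * (x * of_int (a (n + i))))
        = x * of_int (\<Sum>i\<le>degree P. coeff P i * a (n + i))"
      by (simp add: sum_distrib_left ac_simps)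
    also have "\<dots> = 0" using rec unfolding satisfies_rec_def by simp
    finally show ?thesis
      unfolding err_def by (simp add: algebra_simps sum_subtractf)
  qed
  ultimately have "eventually (\<lambda>n. (\<Sum>i\<le>degree P. coeff P i * r (n + i)) = 0) sequentially"
    by (intro eventually_zero_if_of_int_tendsto_zero) simp
  then obtain N where N: "\<And>n. n \<ge> N \<Longrightarrow> (\<Sum>i\<le>degree P. coeff P i * r (n + i)) = 0"
    by (auto simp: eventually_sequentially)
  have "satisfies_rec P (\<lambda>n. r (n + N))"
    unfolding satisfies_rec_def
  proof
    fix n show "(\<Sum>i\<le>degree P. coeff P i * r (n + i + N)) = 0"
      using N[of "n + N"] by (simp add: ac_simps)
  qed
  then show ?thesis unfolding r_def by (rule that)
qed

lemma of_int_mem_Rset: "of_int z \<in> Rset P"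
  unfolding Rset_def by (simp flip: of_int_mult)

lemma Rset_uminus: "x \<in> Rset P \<Longrightarrow> - x \<in> Rset P"
  unfolding Rset_def by simp

lemma Rset_add:
  assumes "x \<in> Rset P" and "y \<in> Rset P"
  shows "x + y \<in> Rset P"
  unfolding Rset_def
proof (intro CollectI allI impI)
  fix a assume "satisfies_rec P a"
  then have "(\<lambda>n. dist_nint (x * of_int (a n)) + dist_nint (y * of_int (a n))) \<longlonglongrightarrow> 0 + 0"
    using assms unfolding Rset_def by (intro tendsto_add) auto
  then show "(\<lambda>n. dist_nint ((x + y) * of_int (a n))) \<longlonglongrightarrow> 0"
    by (intro dist_nint_tendsto_zero_if_bounded) (auto simp: distrib_right intro: dist_nint_add_le)
qed

lemma Rset_diff: "x \<in> Rset P \<Longrightarrow> y \<in> Rset P \<Longrightarrow> x - y \<in> Rset P"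
  using Rset_add[OF _ Rset_uminus, of x P y] by simp

lemma Rset_mult:
  assumes x: "x \<in> Rset P" and y: "y \<in> Rset P"
  shows "x * y \<in> Rset P"
  unfolding Rset_def
proof (intro CollectI allI impI)
  fix a assume a: "satisfies_rec P a"
  have lim_x: "(\<lambda>n. dist_nint (x * of_int (a n))) \<longlonglongrightarrow> 0"
    using x a unfolding Rset_def by auto
  obtain N where c: "satisfies_rec P (\<lambda>n. round (x * of_int (a (n + N))))"
    using satisfies_rec_round_shift[OF a lim_x] .
  define c where "c n = round (x * of_int (a (n + N)))" for n
  have lim_y: "(\<lambda>n. dist_nint (y * of_int (c n))) \<longlonglongrightarrow> 0"
    using y c unfolding Rset_def c_def by auto
  have "(\<lambda>n. \<bar>y\<bar> * dist_nint (x * of_int (a (n + N)))) \<longlonglongrightarrow> \<bar>y\<bar> * 0"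
    by (intro tendsto_intros LIMSEQ_ignore_initial_segment[OF lim_x])
  from tendsto_add[OF this lim_y]
  have "(\<lambda>n. dist_nint (x * y * of_int (a (n + N)))) \<longlonglongrightarrow> 0"
  proof (intro dist_nint_tendsto_zero_if_bounded)
    fix n
    have "dist_nint (x * y * of_int (a (n + N))) \<le> \<bar>x * y * of_int (a (n + N)) - of_int (round (y * of_int (c n)))\<bar>"
      by (rule dist_nint_le)
    also have "x * y * of_int (a (n + N)) - of_int (round (y * of_int (c n)))
        = y * (x * of_int (a (n + N)) - of_int (c n)) + (y * of_int (c n) - of_int (round (y * of_int (c n))))"
      by (simp add: algebra_simps)
    also have "\<bar>\<dots>\<bar> \<le> \<bar>y\<bar> * \<bar>x * of_int (a (n + N)) - of_int (c n)\<bar> + \<bar>y * of_int (c n) - of_int (round (y * of_int (c n)))\<bar>"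
      by (metis abs_mult abs_triangle_ineq)
    finally show "dist_nint (x * y * of_int (a (n + N))) \<le> \<bar>y\<bar> * dist_nint (x * of_int (a (n + N))) + dist_nint (y * of_int (c n))"
      by (simp add: dist_nint_eq_abs_round c_def)
  qed simp
  then show "(\<lambda>n. dist_nint (x * y * of_int (a n))) \<longlonglongrightarrow> 0"
    by (rule LIMSEQ_offset)
qed

function rec_solution :: "int poly \<Rightarrow> (nat \<Rightarrow> int) \<Rightarrow> nat \<Rightarrow> int" where
  "rec_solution P v n = (if n < degree P then v n
     else - (\<Sum>i<degree P. coeff P i * rec_solution P v (n - degree P + i)))"
  by pat_completeness auto
termination by (relation "measure (\<lambda>(P, v, n). n)") auto

declare rec_solution.simps [simp del]

definition rec_basis :: "int poly \<Rightarrow> nat \<Rightarrow> nat \<Rightarrow> int" where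
  "rec_basis P l = rec_solution P (\<lambda>i. of_bool (i = l))"

lemma rec_solution_initial: "n < degree P \<Longrightarrow> rec_solution P v n = v n"
  by (simp add: rec_solution.simps)

lemma satisfies_rec_rec_solution:
  assumes "lead_coeff P = 1"
  shows "satisfies_rec P (rec_solution P v)"
  unfolding satisfies_rec_iff_monic[OF assms]
  by (subst rec_solution.simps) (simp add: ac_simps)

lemma satisfies_rec_rec_basis: "lead_coeff P = 1 \<Longrightarrow> satisfies_rec P (rec_basis P l)"
  unfolding rec_basis_def by (rule satisfies_rec_rec_solution)

lemma rec_basis_initial: "n < degree P \<Longrightarrow> rec_basis P l n = of_bool (n = l)"
  by (simp add: rec_basis_def rec_solution_initial)

lemma satisfies_rec_eq_sum_rec_basis:
  assumes lc: "lead_coeff P = 1" and a: "satisfies_rec P a"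
  shows "a n = (\<Sum>l<degree P. a l * rec_basis P l n)"
proof (induction n rule: less_induct)
  case (less n)
  show ?case
  proof (cases "n < degree P")
    case True
    then show ?thesis by (simp add: rec_basis_initial)
  next
    case False
    define m where "m = n - degree P"
    have n: "n = m + degree P" using False m_def by simp
    have "a n = - (\<Sum>i<degree P. coeff P i * a (m + i))"
      using a unfolding satisfies_rec_iff_monic[OF lc] n by blast
    also have "\<dots> = - (\<Sum>i<degree P. coeff P i * (\<Sum>l<degree P. a l * rec_basis P l (m + i)))"
      using less n by (intro arg_cong[where f = uminus] sum.cong refl arg_cong2[where f = "(*)"]) simp_all
    also have "\<dots> = (\<Sum>l<degree P. a l * - (\<Sum>i<degree P. coeff P i * rec_basis P l (m + i)))"
      unfolding sum_negf[symmetric] sum_distrib_left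
      by (subst sum.swap) (simp add: ac_simps)
    also have "\<dots> = (\<Sum>l<degree P. a l * rec_basis P l n)"
      using satisfies_rec_rec_basis[OF lc] unfolding satisfies_rec_iff_monic[OF lc] n by simp
    finally show ?thesis .
  qed
qed

lemma satisfies_rec_zero_if_eventually_zero:
  assumes "coeff P 0 \<noteq> 0" and a: "satisfies_rec P a" and "\<forall>m\<ge>N. a m = 0"
  shows "a n = 0"
  using assms(3)
proof (induction N)
  case 0
  then show ?case by simp
next
  case (Suc N)
  have "0 = (\<Sum>i\<le>degree P. coeff P i * a (N + i))"
    using a unfolding satisfies_rec_def by simp
  also have "\<dots> = coeff P 0 * a N"
    using Suc.prems by (simp add: sum.atMost_shift)
  finally have "a N = 0" using assms(1) by simp
  with Suc.prems show ?case
    by (intro Suc.IH) (metis le_antisym not_less_eq_eq)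
qed

lemma satisfies_rec_extend_backward_Suc:
  assumes "is_unit (coeff P 0)" and c: "satisfies_rec P c"
  obtains b where "satisfies_rec P b" and "\<And>n. b (Suc n) = c n"
proof
  define b where "b n = (if n = 0 then - (\<Sum>i<degree P. coeff P (Suc i) * c i) div coeff P 0
    else c (n - 1))" for n
  show "b (Suc n) = c n" for n by (simp add: b_def)
  show "satisfies_rec P b" unfolding satisfies_rec_def
  proof
    fix n show "(\<Sum>i\<le>degree P. coeff P i * b (n + i)) = 0"
    proof (cases n)
      case 0
      then show ?thesis
        using assms(1) by (simp add: sum.atMost_shift b_def unit_imp_dvd)
    next
      case (Suc m)
      then show ?thesis using c unfolding satisfies_rec_def by (simp add: b_def)
    qed
  qed
qed

lemma satisfies_rec_extend_backward:
  assumes "is_unit (coeff P 0)"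
  shows "satisfies_rec P c \<Longrightarrow> \<exists>b. satisfies_rec P b \<and> (\<forall>n. b (n + N) = c n)"
proof (induction N arbitrary: c)
  case 0
  then show ?case by auto
next
  case (Suc N)
  obtain b where b: "satisfies_rec P b" "\<And>n. b (Suc n) = c n"
    using satisfies_rec_extend_backward_Suc[OF assms Suc.prems] by metis
  obtain b' where "satisfies_rec P b'" "\<forall>n. b' (n + N) = b n"
    using Suc.IH[OF b(1)] by blast
  with b(2) show ?case by (intro exI[of _ b']) (simp flip: add_Suc)
qed

lemma Rset_approx_by_solution:
  assumes "is_unit (coeff P 0)" and \<beta>: "\<beta> \<in> Rset P" and a: "satisfies_rec P a"
  obtains b where "satisfies_rec P b" and "(\<lambda>n. \<beta> * of_int (a n) - of_int (b n)) \<longlonglongrightarrow> 0"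
proof -
  have lim: "(\<lambda>n. dist_nint (\<beta> * of_int (a n))) \<longlonglongrightarrow> 0"
    using \<beta> a unfolding Rset_def by blast
  obtain N where "satisfies_rec P (\<lambda>n. round (\<beta> * of_int (a (n + N))))"
    using satisfies_rec_round_shift[OF a lim] .
  then obtain b where b: "satisfies_rec P b" "\<forall>n. b (n + N) = round (\<beta> * of_int (a (n + N)))"
    using satisfies_rec_extend_backward[OF assms(1)] by blast
  have "(\<lambda>n. \<beta> * of_int (a (n + N)) - of_int (b (n + N))) \<longlonglongrightarrow> 0"
    using LIMSEQ_ignore_initial_segment[OF lim[unfolded tendsto_dist_nint_iff], of N] b(2) by simp
  then have "(\<lambda>n. \<beta> * of_int (a n) - of_int (b n)) \<longlonglongrightarrow> 0"
    by (rule LIMSEQ_offset)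
  with b(1) show ?thesis by (rule that)
qed

lemma tendsto_zero_if_mult_mat_vec_tendsto_zero:
  fixes D :: "'a :: real_normed_field mat"
  assumes D: "D \<in> carrier_mat k k" and "det D \<noteq> 0"
    and x: "\<And>n. x n \<in> carrier_vec k"
    and lim: "\<And>j. j < k \<Longrightarrow> (\<lambda>n. (D *\<^sub>v x n) $ j) \<longlonglongrightarrow> 0"
    and "l < k"
  shows "(\<lambda>n. x n $ l) \<longlonglongrightarrow> 0"
proof -
  obtain D' where D': "D' \<in> carrier_mat k k" "D' * D = 1\<^sub>m k"
    using det_non_zero_imp_unit[OF D \<open>det D \<noteq> 0\<close>] by (auto simp: Units_def ring_mat_def)
  have "x n $ l = (\<Sum>j<k. D' $$ (l, j) * (D *\<^sub>v x n) $ j)" for n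
  proof -
    have "x n $ l = (D' *\<^sub>v (D *\<^sub>v x n)) $ l"
      using D D' x by (simp flip: assoc_mult_mat_vec)
    also have "\<dots> = (\<Sum>j<k. D' $$ (l, j) * (D *\<^sub>v x n) $ j)"
      using D D' \<open>l < k\<close> by (simp add: scalar_prod_def atLeast0LessThan)
    finally show ?thesis .
  qed
  moreover have "(\<lambda>n. \<Sum>j<k. D' $$ (l, j) * (D *\<^sub>v x n) $ j) \<longlonglongrightarrow> 0"
    using lim by (intro tendsto_null_sum tendsto_mult_right_zero) simp
  ultimately show ?thesis by simp
qed

lemma algebraic_int_root_char_poly_of_int_mat:
  fixes x :: "'a :: field_char_0"
  assumes B: "B \<in> carrier_mat n n" and root: "poly (char_poly (map_mat of_int B)) x = 0"
  shows "algebraic_int x"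
  unfolding algebraic_int_altdef_ipoly
proof (intro exI conjI)
  show "poly (map_poly of_int (char_poly B)) x = 0"
    using root by (simp add: of_int_hom.char_poly_hom[OF B])
  show "lead_coeff (char_poly B) = 1"
    using degree_monic_char_poly[OF B] by simp
qed

theorem algebraic_int_if_mem_Rset:
  assumes lc: "lead_coeff P = 1" and deg: "degree P \<ge> 1" and unit: "is_unit (coeff P 0)"
    and \<beta>: "\<beta> \<in> Rset P"
  shows "algebraic_int \<beta>"
proof -
  define k where "k = degree P"
  define e where "e = rec_basis P"
  have "\<forall>j. \<exists>b. satisfies_rec P b \<and> (\<lambda>n. \<beta> * of_int (e j n) - of_int (b n)) \<longlonglongrightarrow> 0"
    using Rset_approx_by_solution[OF unit \<beta> satisfies_rec_rec_basis[OF lc]] unfolding e_def by metis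
  then obtain b where b_rec: "\<And>j. satisfies_rec P (b j)"
    and b_lim: "\<And>j. (\<lambda>n. \<beta> * of_int (e j n) - of_int (b j n)) \<longlonglongrightarrow> 0"
    by metis
  define B where "B = mat k k (\<lambda>(j, l). b j l)"
  define D where "D = - char_matrix (map_mat real_of_int B) \<beta>"
  define E where "E n = vec k (\<lambda>l. real_of_int (e l n))" for n
  have B: "B \<in> carrier_mat k k" and D: "D \<in> carrier_mat k k"
    by (simp_all add: B_def D_def)
  have DE: "(D *\<^sub>v E n) $ j = \<beta> * of_int (e j n) - of_int (b j n)" if "j < k" for j n
  proof -
    have "(D *\<^sub>v E n) $ j = (\<Sum>l<k. (if l = j then \<beta> * of_int (e l n) else 0) - of_int (b j l) * of_int (e l n))"
      using that by (simp add: D_def B_def E_def char_matrix_def scalar_prod_def atLeast0LessThan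
          flip: sum_negf) (auto intro!: sum.cong simp: algebra_simps)
    also have "\<dots> = \<beta> * of_int (e j n) - of_int (\<Sum>l<k. b j l * e l n)"
      using that by (simp add: sum_subtractf)
    also have "(\<Sum>l<k. b j l * e l n) = b j n"
      unfolding k_def e_def by (rule satisfies_rec_eq_sum_rec_basis[OF lc b_rec, symmetric])
    finally show ?thesis .
  qed
  have "det D = 0"
  proof (rule ccontr)
    assume "det D \<noteq> 0"
    have "(\<lambda>n. E n $ 0) \<longlonglongrightarrow> 0"
    proof (rule tendsto_zero_if_mult_mat_vec_tendsto_zero[OF D \<open>det D \<noteq> 0\<close>])
      show "E n \<in> carrier_vec k" for n
        by (simp add: E_def)
      show "(\<lambda>n. (D *\<^sub>v E n) $ j) \<longlonglongrightarrow> 0" if "j < k" for j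
        using b_lim[of j] by (simp add: DE[OF that])
      show "0 < k"
        using deg by (simp add: k_def)
    qed
    then have "eventually (\<lambda>n. e 0 n = 0) sequentially"
      using deg by (intro eventually_zero_if_of_int_tendsto_zero) (simp add: E_def k_def)
    then obtain N where "\<forall>n\<ge>N. e 0 n = 0"
      by (auto simp: eventually_sequentially)
    then have "e 0 0 = 0"
      using unit satisfies_rec_rec_basis[OF lc]
      by (intro satisfies_rec_zero_if_eventually_zero[of P]) (auto simp: e_def)
    moreover have "e 0 0 = 1"
      using deg by (simp add: e_def rec_basis_initial)
    ultimately show False by simp
  qed
  then have "poly (char_poly (map_mat real_of_int B)) \<beta> = 0"
    using char_poly_matrix[of "map_mat real_of_int B" k \<beta>] B by (simp add: D_def)
  then show ?thesis
    by (rule algebraic_int_root_char_poly_of_int_mat[OF B])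
qed

theorem mainTheorem13:
  fixes P :: "int poly"
  assumes "lead_coeff P = 1" and "degree P \<ge> 1"
  shows "0 \<in> Rset P \<and> 1 \<in> Rset P \<and>
         (\<forall>x\<in>Rset P. \<forall>y\<in>Rset P. x + y \<in> Rset P \<and> x - y \<in> Rset P \<and> x * y \<in> Rset P)
         \<and> ((poly P 0 = 1 \<or> poly P 0 = -1) \<longrightarrow> (\<forall>\<beta>\<in>Rset P. algebraic_int \<beta>))"
proof (intro conjI ballI impI)
  show "0 \<in> Rset P" and "1 \<in> Rset P"
    using of_int_mem_Rset[of 0 P] of_int_mem_Rset[of 1 P] by simp_all
  fix x y assume "x \<in> Rset P" and "y \<in> Rset P"
  then show "x + y \<in> Rset P" and "x - y \<in> Rset P" and "x * y \<in> Rset P"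
    by (simp_all add: Rset_add Rset_diff Rset_mult)
next
  fix \<beta> assume "poly P 0 = 1 \<or> poly P 0 = -1" and "\<beta> \<in> Rset P"
  moreover from this(1) have "is_unit (coeff P 0)"
    by (auto simp: poly_0_coeff_0)
  ultimately show "algebraic_int \<beta>"
    using algebraic_int_if_mem_Rset assms by blast
qed

end
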